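(* Let $k\ge1$, and let $\mathcal P=\{p_1,\dots,p_{k^2}\}$ be a family of real polynomials in the commuting variables $x_1,\dots,x_{2k^2}$ admitting an nc representation $p(X,Y)$ of degree $d>1$. Let $t\ge2$ and suppose $$p(X,Y)=d_1X^t+d_2X^{t-1}Y+d_3YX^{t-1}+q(X,Y),$$ where $q$ contains no scalar multiples of $X^t,X^{t-1}Y,YX^{t-1}$, and $d_1,d_2,d_3$ are pairwise distinct. If $x_u$ is a diagonal entry of $X$, then the family contains (counting over all polynomials) exactly: $2k-2$ terms $d_1x_u^{t-1}x_v$ with $x_v\ne x_u$ if $d_1\ne0$; $k-1$ terms $d_2x_u^{t-1}x_v$ with $x_v$ an off-diagonal entry of $Y$ if $d_2\ne0$; $k-1$ terms $d_3x_u^{t-1}x_v$ with $x_v$ an off-diagonal entry of $Y$ if $d_3\ne0$; and $1$ term $\varphi(t-1,1)x_u^{t-1}x_v$ with $x_v$ a diagonal entry of $Y$ if $\varphi(t-1,1)\ne0$. These account for all two letter terms of degree $t$ in which $x_u$ has degree $t-1$, and no two terms in this list are the same. Moreover, if $x_u$ is in position $(a,a)$ of $X$ and $p_{ab}$ denotes the polynomial in position $(a,b)$ of the array $p(X,Y)$, then for $b\ne a$, $$p_{ab}=d_1x_u^{t-1}x_v+d_2x_u^{t-1}x_w+\cdots,$$ where $x_v$ (resp. $x_w$) is the $(a,b)$ entry of $X$ (resp. $Y$) and $p_{ab}$ contains no other two letter monomials of degree $t$ having $x_u^{t-1}$ as a factor; and similarly $$p_{ba}=d_1x_u^{t-1}x_m+d_3x_u^{t-1}x_n+\cdots,$$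 where $x_m$ (resp. $x_n$) is the $(b,a)$ entry of $X$ (resp. $Y$) and $p_{ba}$ contains no other two letter monomials of degree $t$ having $x_u^{t-1}$ as a factor.
   Context: The family $\mathcal P$ admits an nc representation $p(X,Y)$ if there are $k\times k$ matrices $X,Y$ whose $2k^2$ entries are the variables $x_1,\dots,x_{2k^2}$, each used exactly once, and a noncommutative polynomial $p$ in two letters with real coefficients such that the matrix $p(X,Y)$ is a $k\times k$ array whose entries are $p_1,\dots,p_{k^2}$, each exactly once. A "term" means a monomial with its nonzero coefficient after collecting like terms. $\varphi(i,j)$ is the sum of coefficients of all monomials of $p$ of degree $i$ in $X$ and $j$ in $Y$. *)

theory Defs
  imports Complex_Main "HOL-Library.Multiset"
begin

text \<open>Noncommutative polynomials in two letters: words over bool (False = X, True = Y)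
  with real coefficients; the coefficient of a word is the value of the function.\<close>

type_synonym ncpoly = "bool list \<Rightarrow> real"
type_synonym cpoly = "nat multiset \<Rightarrow> real"

definition nc_support :: "ncpoly \<Rightarrow> bool list set" where
  "nc_support p = {w. p w \<noteq> 0}"

definition nc_has_degree :: "ncpoly \<Rightarrow> nat \<Rightarrow> bool" where
  "nc_has_degree p d \<longleftrightarrow> (\<exists>w\<in>nc_support p. length w = d) \<and> (\<forall>w\<in>nc_support p. length w \<le> d)"

definition wX :: "nat \<Rightarrow> bool list" where "wX n = replicate n False"

definition word_mono :: "(nat \<Rightarrow> nat \<Rightarrow> nat) \<Rightarrow> (nat \<Rightarrow> nat \<Rightarrow> nat) \<Rightarrow> bool list \<Rightarrow> nat list \<Rightarrow> nat multiset" where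
  "word_mono X Y w is = mset (map (\<lambda>j. (if w ! j then Y else X) (is ! j) (is ! Suc j)) [0..<length w])"

text \<open>Entry (a,b) of the k x k matrix p(X,Y), a commutative polynomial, collected:
  coefficient of monomial m.\<close>
definition ncentry :: "nat \<Rightarrow> ncpoly \<Rightarrow> (nat \<Rightarrow> nat \<Rightarrow> nat) \<Rightarrow> (nat \<Rightarrow> nat \<Rightarrow> nat) \<Rightarrow> nat \<Rightarrow> nat \<Rightarrow> cpoly" where
  "ncentry k p X Y a b m =
     (\<Sum>w\<in>nc_support p. p w * real (card {is. length is = Suc (length w) \<and> set is \<subseteq> {..<k}
        \<and> is ! 0 = a \<and> is ! length w = b \<and> word_mono X Y w is = m}))"

definition phi :: "ncpoly \<Rightarrow> nat \<Rightarrow> nat \<Rightarrow> real" where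
  "phi p i j = (\<Sum>w\<in>{w\<in>nc_support p. count_list w False = i \<and> count_list w True = j}. p w)"

definition nc_rep :: "nat \<Rightarrow> (nat \<Rightarrow> cpoly) \<Rightarrow> (nat \<Rightarrow> nat \<Rightarrow> nat) \<Rightarrow> (nat \<Rightarrow> nat \<Rightarrow> nat) \<Rightarrow> ncpoly \<Rightarrow> bool" where
  "nc_rep k P X Y p \<longleftrightarrow>
     finite (nc_support p) \<and>
     bij_betw (\<lambda>(c, i, j). if c then Y i j else X i j) (UNIV \<times> {..<k} \<times> {..<k}) {1..2 * k^2} \<and>
     (\<exists>\<sigma>. bij_betw \<sigma> ({..<k} \<times> {..<k}) {1..k^2} \<and>
          (\<forall>a<k. \<forall>b<k. ncentry k p X Y a b = P (\<sigma> (a, b))))"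

end

theory Submission
  imports Defs
begin

text \<open>Entry (i, j) of p(X, Y) is a sum, over the words w of p and the index walks
  i = i_0, ..., i_t = j, of the monomials formed by the matrix entries (i_r, i_(r+1)) of the letters of w.
  Since all entries of X and Y are distinct variables, the monomial x_u^(t-1) x_v with u = X a a
  forces every step but one to be the letter X at position (a, a). The walk is therefore
  i, a, ..., a, j and is determined by its endpoints, and for t \<ge> 2 it exists only if i = a or j = a.
  In row a only the words X^t and X^(t-1) Y can contribute, in column a only X^t and Y X^(t-1), and at
  (a, a) every word with t - 1 letters X and one letter Y contributes x_u^(t-1) y_aa. Each of the
  k - 1 off-diagonal positions of row a and of column a thus carries exactly one X-term and one
  Y-term.\<close>

lemma mset_map_upt_eq_replicate_add_iff:
  assumes "v \<noteq> u"
  shows "mset (map f [0..<t]) = replicate_mset (t - 1) u + {#v#} \<longleftrightarrow>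
    (\<exists>r0<t. f r0 = v \<and> (\<forall>r<t. r \<noteq> r0 \<longrightarrow> f r = u))"
proof
  assume eq: "mset (map f [0..<t]) = replicate_mset (t - 1) u + {#v#}"
  have "card {r. r < t \<and> f r = v} = count (mset (map f [0..<t])) v"
    unfolding count_mset count_list_eq_length_filter length_filter_conv_card
    by (rule arg_cong[where f = card]) (auto simp del: upt_Suc)
  also have "\<dots> = 1"
    using eq assms by simp
  finally obtain r0 where r0: "{r. r < t \<and> f r = v} = {r0}"
    by (auto simp: card_1_singleton_iff)
  have "f r = u" if "r < t" "r \<noteq> r0" for r
  proof -
    have "f r \<in># mset (map f [0..<t])"
      using that by simp
    then have "f r = u \<or> f r = v"
      unfolding eq by (auto split: if_splits)
    moreover have "f r \<noteq> v"
      using r0 that by blast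
    ultimately show ?thesis by blast
  qed
  then show "\<exists>r0<t. f r0 = v \<and> (\<forall>r<t. r \<noteq> r0 \<longrightarrow> f r = u)"
    using r0 by blast
next
  assume "\<exists>r0<t. f r0 = v \<and> (\<forall>r<t. r \<noteq> r0 \<longrightarrow> f r = u)"
  then obtain r0 where "r0 < t" "f r0 = v" "\<forall>r<t. r \<noteq> r0 \<longrightarrow> f r = u"
    by blast
  then show "mset (map f [0..<t]) = replicate_mset (t - 1) u + {#v#}"
  proof (induction t)
    case (Suc t)
    show ?case
    proof (cases "r0 = t")
      case True
      with Suc.prems have "map f [0..<t] = map (\<lambda>_. u) [0..<t]"
        by (intro map_cong) auto
      with True Suc.prems show ?thesis
        by (simp add: map_replicate_const del: mset_upt)
    next
      case False
      with Suc show ?thesis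
        by (cases t) (auto simp: add_mset_commute simp del: mset_upt)
    qed
  qed simp
qed

lemma count_list_eq_1_iff:
  "count_list xs x = 1 \<longleftrightarrow> (\<exists>r0<length xs. xs ! r0 = x \<and> (\<forall>r<length xs. r \<noteq> r0 \<longrightarrow> xs ! r \<noteq> x))"
proof -
  have "count_list xs x = card {r. r < length xs \<and> xs ! r = x}"
    unfolding count_list_eq_length_filter length_filter_conv_card
    by (rule arg_cong[where f = card]) auto
  then show ?thesis
    by (auto simp: card_1_singleton_iff)
qed

lemma count_list_True_add_False: "count_list w True + count_list w False = length w"
  by (induction w) auto

lemma wX_snoc_False: "t \<ge> 1 \<Longrightarrow> wX (t - 1) @ [False] = wX t"
  and wX_Cons_False: "t \<ge> 1 \<Longrightarrow> False # wX (t - 1) = wX t"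
  by (cases t; simp add: wX_def replicate_append_same)+

lemma size_word_mono [simp]: "size (word_mono X Y w is) = length w"
  by (simp add: word_mono_def)

lemma sum_nc_support_Int:
  assumes "finite W"
  shows "(\<Sum>w\<in>{w\<in>nc_support p. w \<in> W}. p w) = sum p W"
  using assms by (intro sum.mono_neutral_left) (auto simp: nc_support_def)

lemma diag_path_unique:
  assumes "length is = Suc t" "t \<ge> 1" "is ! 0 = i" "is ! t = j"
    and "\<forall>r<t. r \<noteq> r0 \<longrightarrow> is ! r = a \<and> is ! Suc r = a"
  shows "is = i # replicate (t - 1) a @ [j]"
proof (rule nth_equalityI)
  fix s
  assume "s < length is"
  moreover have "is ! s = a" if "0 < s" "s < t"
    using assms(5) that by (cases "s = r0") (auto dest: spec[of _ "s - 1"])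
  ultimately show "is ! s = (i # replicate (t - 1) a @ [j]) ! s"
    using assms by (cases "s = t") (auto simp: nth_Cons nth_append split: nat.split)
qed (use assms in simp)

lemma nth_diag_path:
  assumes "r < t"
  shows "(i # replicate (t - 1) a @ [j]) ! r = (if r = 0 then i else a)"
    and "(i # replicate (t - 1) a @ [j]) ! Suc r = (if Suc r = t then j else a)"
  using assms by (auto simp: nth_Cons nth_append split: nat.split)

locale nc_variables =
  fixes k :: nat and X Y :: "nat \<Rightarrow> nat \<Rightarrow> nat"
  assumes variables_inj: "inj_on (\<lambda>(c, i, j). if c then Y i j else X i j) (UNIV \<times> {..<k} \<times> {..<k})"
begin

lemma letter_eq_iff:
  assumes "i < k" "j < k" "i' < k" "j' < k"
  shows "(if c then Y else X) i j = (if c' then Y else X) i' j' \<longleftrightarrow> c = c' \<and> i = i' \<and> j = j'"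
  using inj_onD[OF variables_inj, of "(c, i, j)" "(c', i', j')"] assms by (cases c; cases c') auto

lemma X_eq_iff [simp]: "i < k \<Longrightarrow> j < k \<Longrightarrow> i' < k \<Longrightarrow> j' < k \<Longrightarrow> X i j = X i' j' \<longleftrightarrow> i = i' \<and> j = j'"
  and Y_eq_iff [simp]: "i < k \<Longrightarrow> j < k \<Longrightarrow> i' < k \<Longrightarrow> j' < k \<Longrightarrow> Y i j = Y i' j' \<longleftrightarrow> i = i' \<and> j = j'"
  and X_neq_Y [simp]: "i < k \<Longrightarrow> j < k \<Longrightarrow> i' < k \<Longrightarrow> j' < k \<Longrightarrow> X i j \<noteq> Y i' j'"
  and Y_neq_X [simp]: "i < k \<Longrightarrow> j < k \<Longrightarrow> i' < k \<Longrightarrow> j' < k \<Longrightarrow> Y i j \<noteq> X i' j'"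
  using letter_eq_iff[of i j i' j' False False] letter_eq_iff[of i j i' j' True True]
    letter_eq_iff[of i j i' j' False True] letter_eq_iff[of i j i' j' True False]
  by auto

definition X_vars where "X_vars = {X i j | i j. i < k \<and> j < k}"
definition Y_offdiag_vars where "Y_offdiag_vars = {Y i j | i j. i < k \<and> j < k \<and> i \<noteq> j}"
definition Y_diag_vars where "Y_diag_vars = {Y i i | i. i < k}"

lemma X_in_X_vars [simp]: "i < k \<Longrightarrow> j < k \<Longrightarrow> X i j \<in> X_vars"
  and Y_in_Y_offdiag_vars_iff [simp]: "i < k \<Longrightarrow> j < k \<Longrightarrow> Y i j \<in> Y_offdiag_vars \<longleftrightarrow> i \<noteq> j"
  and Y_in_Y_diag_vars_iff [simp]: "i < k \<Longrightarrow> j < k \<Longrightarrow> Y i j \<in> Y_diag_vars \<longleftrightarrow> i = j"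
  unfolding X_vars_def Y_offdiag_vars_def Y_diag_vars_def by auto

lemma variable_classes_disjoint:
  "X_vars \<inter> Y_offdiag_vars = {}" "X_vars \<inter> Y_diag_vars = {}" "Y_offdiag_vars \<inter> Y_diag_vars = {}"
  unfolding X_vars_def Y_offdiag_vars_def Y_diag_vars_def by auto

lemma word_mono_eq_diag_monomial_iff:
  assumes "a < k" "length w = t" "length is = Suc t" "set is \<subseteq> {..<k}" "v \<noteq> X a a"
  shows "word_mono X Y w is = replicate_mset (t - 1) (X a a) + {#v#} \<longleftrightarrow>
    (\<exists>r0<t. (if w ! r0 then Y else X) (is ! r0) (is ! Suc r0) = v
       \<and> (\<forall>r<t. r \<noteq> r0 \<longrightarrow> \<not> w ! r \<and> is ! r = a \<and> is ! Suc r = a))"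
proof -
  have "(if w ! r then Y else X) (is ! r) (is ! Suc r) = X a a \<longleftrightarrow> \<not> w ! r \<and> is ! r = a \<and> is ! Suc r = a"
    if "r < t" for r
    using letter_eq_iff[of "is ! r" "is ! Suc r" a a "w ! r" False] that assms nth_mem[of _ "is"]
    by (simp add: subset_iff)
  then show ?thesis
    unfolding word_mono_def assms(2) mset_map_upt_eq_replicate_add_iff[OF assms(5)]
    by auto
qed

lemma card_diag_paths:
  assumes "a < k" "i < k" "j < k" "t \<ge> 1" "v \<noteq> X a a"
  defines "m \<equiv> replicate_mset (t - 1) (X a a) + {#v#}"
  shows "card {is. length is = Suc (length w) \<and> set is \<subseteq> {..<k} \<and> is ! 0 = i \<and> is ! length w = j
            \<and> word_mono X Y w is = m}
       = (if length w = t \<and> word_mono X Y w (i # replicate (t - 1) a @ [j]) = m then 1 else 0)"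
    (is "card ?S = _")
proof -
  let ?path = "i # replicate (t - 1) a @ [j]"
  have elem: "is = ?path \<and> length w = t" if "is \<in> ?S" for "is"
  proof -
    have "length w = size m"
      using that size_word_mono[of X Y w "is"] by simp
    then have "length w = t"
      using assms(4) by (simp add: m_def)
    with that obtain r0 where "\<forall>r<t. r \<noteq> r0 \<longrightarrow> is ! r = a \<and> is ! Suc r = a"
      using word_mono_eq_diag_monomial_iff[OF assms(1) \<open>length w = t\<close>, of "is" v] assms(5)
      by (auto simp: m_def)
    with that \<open>length w = t\<close> assms(4) show ?thesis
      using diag_path_unique[of "is" t i j r0 a] by auto
  qed
  show ?thesis
  proof (cases "length w = t \<and> word_mono X Y w ?path = m")
    case True
    then have "?path \<in> ?S"
      using assms(1-4) by (simp add: nth_append subset_iff)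
    with elem have "?S = {?path}"
      by (intro equalityI subsetI) auto
    then show ?thesis
      using True by simp
  next
    case False
    have empty: "?S = {}"
    proof (intro equals0I)
      fix "is"
      assume "is \<in> ?S"
      with elem[OF this] False show False
        by simp
    qed
    show ?thesis
      unfolding empty using False by simp
  qed
qed

lemma ncentry_diag_monomial_eq_sum:
  assumes "finite (nc_support p)" "a < k" "i < k" "j < k" "t \<ge> 1" "v \<noteq> X a a"
  defines "m \<equiv> replicate_mset (t - 1) (X a a) + {#v#}"
  shows "ncentry k p X Y i j m =
    (\<Sum>w\<in>{w\<in>nc_support p. length w = t \<and> word_mono X Y w (i # replicate (t - 1) a @ [j]) = m}. p w)"
  unfolding ncentry_def m_def card_diag_paths[OF assms(2-6)] sum.inter_filter[OF assms(1)]
  by (rule sum.cong) auto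

lemma word_mono_diag_path_iff:
  assumes "a < k" "i < k" "j < k" "length w = t" "t \<ge> 1" "v \<noteq> X a a"
  shows "word_mono X Y w (i # replicate (t - 1) a @ [j]) = replicate_mset (t - 1) (X a a) + {#v#} \<longleftrightarrow>
    (\<exists>r0<t. (if w ! r0 then Y else X) (if r0 = 0 then i else a) (if Suc r0 = t then j else a) = v
       \<and> (\<forall>r<t. r \<noteq> r0 \<longrightarrow> \<not> w ! r \<and> (r = 0 \<longrightarrow> i = a) \<and> (Suc r = t \<longrightarrow> j = a)))"
proof -
  have "length (i # replicate (t - 1) a @ [j]) = Suc t" "set (i # replicate (t - 1) a @ [j]) \<subseteq> {..<k}"
    using assms by auto
  moreover have "(if P then b else a) = a \<longleftrightarrow> (P \<longrightarrow> b = a)" for P and b :: nat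
    by simp
  ultimately show ?thesis
    using word_mono_eq_diag_monomial_iff[OF assms(1,4) _ _ assms(6)]
    by (simp only: nth_diag_path cong: conj_cong imp_cong)
qed

lemma word_mono_row_path_iff:
  assumes "a < k" "j < k" "j \<noteq> a" "length w = t" "t \<ge> 1" "v \<noteq> X a a"
  shows "word_mono X Y w (a # replicate (t - 1) a @ [j]) = replicate_mset (t - 1) (X a a) + {#v#} \<longleftrightarrow>
    (\<exists>c. w = wX (t - 1) @ [c] \<and> (if c then Y else X) a j = v)"
proof -
  have "word_mono X Y w (a # replicate (t - 1) a @ [j]) = replicate_mset (t - 1) (X a a) + {#v#} \<longleftrightarrow>
    (\<exists>r0<t. (if w ! r0 then Y else X) a (if Suc r0 = t then j else a) = v
       \<and> (\<forall>r<t. r \<noteq> r0 \<longrightarrow> \<not> w ! r \<and> Suc r \<noteq> t))"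
    using word_mono_diag_path_iff[OF assms(1,1,2,4,5,6)] assms(3) by simp
  also have "\<dots> \<longleftrightarrow> (\<exists>c. w = wX (t - 1) @ [c] \<and> (if c then Y else X) a j = v)"
  proof
    assume "\<exists>r0<t. (if w ! r0 then Y else X) a (if Suc r0 = t then j else a) = v
       \<and> (\<forall>r<t. r \<noteq> r0 \<longrightarrow> \<not> w ! r \<and> Suc r \<noteq> t)"
    then obtain r0 where letter: "(if w ! r0 then Y else X) a (if Suc r0 = t then j else a) = v"
      and others: "\<forall>r<t. r \<noteq> r0 \<longrightarrow> \<not> w ! r \<and> Suc r \<noteq> t"
      by blast
    have "r0 = t - 1"
      using spec[OF others, of "t - 1"] assms(5) by (cases "r0 = t - 1") auto
    have "w = wX (t - 1) @ [w ! (t - 1)]"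
    proof (rule nth_equalityI)
      fix s
      assume "s < length w"
      with others \<open>r0 = t - 1\<close> assms(4) show "w ! s = (wX (t - 1) @ [w ! (t - 1)]) ! s"
        by (cases "s = t - 1") (auto simp: nth_append wX_def)
    qed (use assms(4,5) in \<open>simp add: wX_def\<close>)
    moreover have "(if w ! (t - 1) then Y else X) a j = v"
      using letter \<open>r0 = t - 1\<close> assms(5) by simp
    ultimately show "\<exists>c. w = wX (t - 1) @ [c] \<and> (if c then Y else X) a j = v"
      by blast
  next
    assume "\<exists>c. w = wX (t - 1) @ [c] \<and> (if c then Y else X) a j = v"
    then show "\<exists>r0<t. (if w ! r0 then Y else X) a (if Suc r0 = t then j else a) = v
       \<and> (\<forall>r<t. r \<noteq> r0 \<longrightarrow> \<not> w ! r \<and> Suc r \<noteq> t)"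
      using assms(5) by (intro exI[of _ "t - 1"]) (auto simp: nth_append wX_def split: if_splits)
  qed
  finally show ?thesis .
qed

lemma word_mono_column_path_iff:
  assumes "a < k" "i < k" "i \<noteq> a" "length w = t" "t \<ge> 2" "v \<noteq> X a a"
  shows "word_mono X Y w (i # replicate (t - 1) a @ [a]) = replicate_mset (t - 1) (X a a) + {#v#} \<longleftrightarrow>
    (\<exists>c. w = c # wX (t - 1) \<and> (if c then Y else X) i a = v)"
proof -
  have "t \<ge> 1"
    using assms(5) by simp
  have "word_mono X Y w (i # replicate (t - 1) a @ [a]) = replicate_mset (t - 1) (X a a) + {#v#} \<longleftrightarrow>
    (\<exists>r0<t. (if w ! r0 then Y else X) (if r0 = 0 then i else a) a = v
       \<and> (\<forall>r<t. r \<noteq> r0 \<longrightarrow> \<not> w ! r \<and> r \<noteq> 0))"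
    using word_mono_diag_path_iff[OF assms(1,2,1,4) \<open>t \<ge> 1\<close> assms(6)] assms(3) by simp
  also have "\<dots> \<longleftrightarrow> (\<exists>c. w = c # wX (t - 1) \<and> (if c then Y else X) i a = v)"
  proof
    assume "\<exists>r0<t. (if w ! r0 then Y else X) (if r0 = 0 then i else a) a = v
       \<and> (\<forall>r<t. r \<noteq> r0 \<longrightarrow> \<not> w ! r \<and> r \<noteq> 0)"
    then obtain r0 where letter: "(if w ! r0 then Y else X) (if r0 = 0 then i else a) a = v"
      and others: "\<forall>r<t. r \<noteq> r0 \<longrightarrow> \<not> w ! r \<and> r \<noteq> 0"
      by blast
    have "r0 = 0"
      using spec[OF others, of 0] \<open>t \<ge> 1\<close> by (cases "r0 = 0") auto
    have "w = w ! 0 # wX (t - 1)"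
    proof (rule nth_equalityI)
      fix s
      assume "s < length w"
      with others \<open>r0 = 0\<close> assms(4) show "w ! s = (w ! 0 # wX (t - 1)) ! s"
        by (cases s) (auto simp: wX_def)
    qed (use assms(4) \<open>t \<ge> 1\<close> in \<open>simp add: wX_def\<close>)
    moreover have "(if w ! 0 then Y else X) i a = v"
      using letter \<open>r0 = 0\<close> by simp
    ultimately show "\<exists>c. w = c # wX (t - 1) \<and> (if c then Y else X) i a = v"
      by blast
  next
    assume "\<exists>c. w = c # wX (t - 1) \<and> (if c then Y else X) i a = v"
    then show "\<exists>r0<t. (if w ! r0 then Y else X) (if r0 = 0 then i else a) a = v
       \<and> (\<forall>r<t. r \<noteq> r0 \<longrightarrow> \<not> w ! r \<and> r \<noteq> 0)"
      using \<open>t \<ge> 1\<close> by (intro exI[of _ 0]) (auto simp: nth_Cons wX_def split: nat.splits)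
  qed
  finally show ?thesis .
qed

lemma word_mono_off_cross_path:
  assumes "a < k" "i < k" "j < k" "i \<noteq> a" "j \<noteq> a" "length w = t" "t \<ge> 2" "v \<noteq> X a a"
  shows "word_mono X Y w (i # replicate (t - 1) a @ [j]) \<noteq> replicate_mset (t - 1) (X a a) + {#v#}"
proof
  have "t \<ge> 1"
    using assms(7) by simp
  assume "word_mono X Y w (i # replicate (t - 1) a @ [j]) = replicate_mset (t - 1) (X a a) + {#v#}"
  then obtain r0 where others: "\<forall>r<t. r \<noteq> r0 \<longrightarrow> (r = 0 \<longrightarrow> i = a) \<and> (Suc r = t \<longrightarrow> j = a)"
    unfolding word_mono_diag_path_iff[OF assms(1-3,6) \<open>t \<ge> 1\<close> assms(8)] by blast
  then show False
    using spec[OF others, of 0] spec[OF others, of "t - 1"] assms(4,5,7) by (cases "r0 = 0") auto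
qed

lemma ncentry_diag:
  assumes "finite (nc_support p)" "a < k" "t \<ge> 1" "v \<noteq> X a a"
  shows "ncentry k p X Y a a (replicate_mset (t - 1) (X a a) + {#v#}) = (if v = Y a a then phi p (t - 1) 1 else 0)"
proof -
  have "length w = t \<and> word_mono X Y w (a # replicate (t - 1) a @ [a]) = replicate_mset (t - 1) (X a a) + {#v#}
      \<longleftrightarrow> v = Y a a \<and> count_list w False = t - 1 \<and> count_list w True = 1" for w
  proof (cases "length w = t")
    case True
    have "(if c then Y else X) a a = v \<longleftrightarrow> c \<and> v = Y a a" for c
      using assms(2,4) by auto
    then have "word_mono X Y w (a # replicate (t - 1) a @ [a]) = replicate_mset (t - 1) (X a a) + {#v#}
        \<longleftrightarrow> v = Y a a \<and> count_list w True = 1"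
      unfolding word_mono_diag_path_iff[OF assms(2,2,2) True assms(3,4)] count_list_eq_1_iff True
      by (simp only: if_cancel simp_thms) blast
    then show ?thesis
      using count_list_True_add_False[of w] True by linarith
  next
    case False
    then show ?thesis
      using count_list_True_add_False[of w] assms(3) by linarith
  qed
  then have "{w \<in> nc_support p. length w = t
        \<and> word_mono X Y w (a # replicate (t - 1) a @ [a]) = replicate_mset (t - 1) (X a a) + {#v#}}
      = (if v = Y a a then {w \<in> nc_support p. count_list w False = t - 1 \<and> count_list w True = 1} else {})"
    by auto
  then show ?thesis
    unfolding ncentry_diag_monomial_eq_sum[OF assms(1,2,2,2,3,4)] phi_def by simp
qed

lemma ncentry_row:
  assumes "finite (nc_support p)" "a < k" "j < k" "j \<noteq> a" "t \<ge> 1" "v \<noteq> X a a"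
  shows "ncentry k p X Y a j (replicate_mset (t - 1) (X a a) + {#v#})
    = (if v = X a j then p (wX t) else if v = Y a j then p (wX (t - 1) @ [True]) else 0)"
proof -
  let ?W = "{wX (t - 1) @ [c] | c. (if c then Y else X) a j = v}"
  have "length w = t \<and> word_mono X Y w (a # replicate (t - 1) a @ [j]) = replicate_mset (t - 1) (X a a) + {#v#}
      \<longleftrightarrow> w \<in> ?W" for w
  proof (cases "length w = t")
    case True
    then show ?thesis
      using word_mono_row_path_iff[OF assms(2-4) True assms(5,6)] by blast
  next
    case False
    then show ?thesis
      using assms(5) by (auto simp: wX_def)
  qed
  then have "ncentry k p X Y a j (replicate_mset (t - 1) (X a a) + {#v#}) = (\<Sum>w\<in>{w \<in> nc_support p. w \<in> ?W}. p w)"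
    unfolding ncentry_diag_monomial_eq_sum[OF assms(1,2,2,3,5,6)] by (simp only:)
  also have "?W = (if v = X a j then {wX t} else if v = Y a j then {wX (t - 1) @ [True]} else {})"
    using assms(2,3) wX_snoc_False[OF assms(5)] by auto
  finally show ?thesis
    by (simp add: sum_nc_support_Int)
qed

lemma ncentry_column:
  assumes "finite (nc_support p)" "a < k" "i < k" "i \<noteq> a" "t \<ge> 2" "v \<noteq> X a a"
  shows "ncentry k p X Y i a (replicate_mset (t - 1) (X a a) + {#v#})
    = (if v = X i a then p (wX t) else if v = Y i a then p (True # wX (t - 1)) else 0)"
proof -
  have "t \<ge> 1"
    using assms(5) by simp
  let ?W = "{c # wX (t - 1) | c. (if c then Y else X) i a = v}"
  have "length w = t \<and> word_mono X Y w (i # replicate (t - 1) a @ [a]) = replicate_mset (t - 1) (X a a) + {#v#}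
      \<longleftrightarrow> w \<in> ?W" for w
  proof (cases "length w = t")
    case True
    then show ?thesis
      using word_mono_column_path_iff[OF assms(2-4) True assms(5,6)] by blast
  next
    case False
    then show ?thesis
      using \<open>t \<ge> 1\<close> by (auto simp: wX_def)
  qed
  then have "ncentry k p X Y i a (replicate_mset (t - 1) (X a a) + {#v#}) = (\<Sum>w\<in>{w \<in> nc_support p. w \<in> ?W}. p w)"
    unfolding ncentry_diag_monomial_eq_sum[OF assms(1,2,3,2) \<open>t \<ge> 1\<close> assms(6)] by (simp only:)
  also have "?W = (if v = X i a then {wX t} else if v = Y i a then {True # wX (t - 1)} else {})"
    using assms(2,3) wX_Cons_False[OF \<open>t \<ge> 1\<close>] by auto
  finally show ?thesis
    by (simp add: sum_nc_support_Int)
qed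

lemma ncentry_off_cross:
  assumes "finite (nc_support p)" "a < k" "i < k" "j < k" "i \<noteq> a" "j \<noteq> a" "t \<ge> 2" "v \<noteq> X a a"
  shows "ncentry k p X Y i j (replicate_mset (t - 1) (X a a) + {#v#}) = 0"
proof -
  have "t \<ge> 1"
    using assms(7) by simp
  with assms show ?thesis
    unfolding ncentry_diag_monomial_eq_sum[OF assms(1-4) \<open>t \<ge> 1\<close> assms(8)]
    using word_mono_off_cross_path[OF assms(2-6) _ assms(7,8)] by (simp cong: conj_cong)
qed

end

text \<open>The coefficients c i j v of x_u^(t-1) x_v, u = X a a, in the entries of p(X, Y), as computed
  above; d4 stands for phi(t-1, 1).\<close>

locale diag_coefficients = nc_variables +
  fixes a :: nat and c :: "nat \<Rightarrow> nat \<Rightarrow> nat \<Rightarrow> real" and d1 d2 d3 d4 :: real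
  assumes a_lt_k: "a < k"
    and c_diag: "v \<noteq> X a a \<Longrightarrow> c a a v = (if v = Y a a then d4 else 0)"
    and c_row: "j < k \<Longrightarrow> j \<noteq> a \<Longrightarrow> v \<noteq> X a a \<Longrightarrow>
      c a j v = (if v = X a j then d1 else if v = Y a j then d2 else 0)"
    and c_column: "i < k \<Longrightarrow> i \<noteq> a \<Longrightarrow> v \<noteq> X a a \<Longrightarrow>
      c i a v = (if v = X i a then d1 else if v = Y i a then d3 else 0)"
    and c_cross: "i < k \<Longrightarrow> j < k \<Longrightarrow> i \<noteq> a \<Longrightarrow> j \<noteq> a \<Longrightarrow> v \<noteq> X a a \<Longrightarrow> c i j v = 0"
begin

definition terms where "terms = {(i, j, v). i < k \<and> j < k \<and> v \<noteq> X a a \<and> c i j v \<noteq> 0}"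

definition row_X where "row_X = (\<lambda>b. (a, b, X a b)) ` ({..<k} - {a})"
definition column_X where "column_X = (\<lambda>b. (b, a, X b a)) ` ({..<k} - {a})"
definition row_Y where "row_Y = (\<lambda>b. (a, b, Y a b)) ` ({..<k} - {a})"
definition column_Y where "column_Y = (\<lambda>b. (b, a, Y b a)) ` ({..<k} - {a})"

lemma mem_terms_iff:
  "(i, j, v) \<in> terms \<longleftrightarrow> i < k \<and> j < k \<and>
     (i = a \<and> j \<noteq> a \<and> (v = X a j \<and> d1 \<noteq> 0 \<or> v = Y a j \<and> d2 \<noteq> 0)
      \<or> j = a \<and> i \<noteq> a \<and> (v = X i a \<and> d1 \<noteq> 0 \<or> v = Y i a \<and> d3 \<noteq> 0)
      \<or> i = a \<and> j = a \<and> v = Y a a \<and> d4 \<noteq> 0)"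
  using a_lt_k c_diag c_row c_column c_cross unfolding terms_def
  by (cases "i = a"; cases "j = a"; cases "v = X a a") (auto split: if_splits)

lemma terms_eq:
  "terms = (if d1 \<noteq> 0 then row_X \<union> column_X else {}) \<union> (if d2 \<noteq> 0 then row_Y else {})
    \<union> (if d3 \<noteq> 0 then column_Y else {}) \<union> (if d4 \<noteq> 0 then {(a, a, Y a a)} else {})"
  using a_lt_k unfolding row_X_def column_X_def row_Y_def column_Y_def by (auto simp: mem_terms_iff)

lemma row_coeffs:
  assumes "b < k" "b \<noteq> a"
  shows "c a b (X a b) = d1 \<and> c a b (Y a b) = d2 \<and> (\<forall>v. v \<noteq> X a a \<and> v \<noteq> X a b \<and> v \<noteq> Y a b \<longrightarrow> c a b v = 0)"
  using assms a_lt_k by (simp add: c_row)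

lemma column_coeffs:
  assumes "b < k" "b \<noteq> a"
  shows "c b a (X b a) = d1 \<and> c b a (Y b a) = d3 \<and> (\<forall>v. v \<noteq> X a a \<and> v \<noteq> X b a \<and> v \<noteq> Y b a \<longrightarrow> c b a v = 0)"
  using assms a_lt_k by (simp add: c_column)

lemma row_X_coeff: "(i, j, v) \<in> row_X \<Longrightarrow> v \<in> X_vars \<and> c i j v = d1"
  and column_X_coeff: "(i, j, v) \<in> column_X \<Longrightarrow> v \<in> X_vars \<and> c i j v = d1"
  and row_Y_coeff: "(i, j, v) \<in> row_Y \<Longrightarrow> v \<in> Y_offdiag_vars \<and> c i j v = d2"
  and column_Y_coeff: "(i, j, v) \<in> column_Y \<Longrightarrow> v \<in> Y_offdiag_vars \<and> c i j v = d3"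
  and diag_coeff: "Y a a \<in> Y_diag_vars \<and> c a a (Y a a) = d4"
  using a_lt_k unfolding row_X_def column_X_def row_Y_def column_Y_def
  by (auto simp: c_diag c_row c_column)

lemma terms_cases:
  assumes "(i, j, v) \<in> terms"
  obtains "(i, j, v) \<in> row_X" "v \<in> X_vars" "c i j v = d1" "d1 \<noteq> 0"
    | "(i, j, v) \<in> column_X" "v \<in> X_vars" "c i j v = d1" "d1 \<noteq> 0"
    | "(i, j, v) \<in> row_Y" "v \<in> Y_offdiag_vars" "c i j v = d2" "d2 \<noteq> 0"
    | "(i, j, v) \<in> column_Y" "v \<in> Y_offdiag_vars" "c i j v = d3" "d3 \<noteq> 0"
    | "(i, j, v) = (a, a, Y a a)" "v \<in> Y_diag_vars" "c i j v = d4" "d4 \<noteq> 0"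
  using assms row_X_coeff column_X_coeff row_Y_coeff column_Y_coeff diag_coeff
  unfolding terms_eq by (auto split: if_splits)

lemma components_subset_terms:
  "d1 \<noteq> 0 \<Longrightarrow> row_X \<union> column_X \<subseteq> terms" "d2 \<noteq> 0 \<Longrightarrow> row_Y \<subseteq> terms"
  "d3 \<noteq> 0 \<Longrightarrow> column_Y \<subseteq> terms" "d4 \<noteq> 0 \<Longrightarrow> (a, a, Y a a) \<in> terms"
  unfolding terms_eq by auto

lemma X_terms:
  "{(i, j, v) \<in> terms. v \<in> X_vars \<and> c i j v = d1} = (if d1 \<noteq> 0 then row_X \<union> column_X else {})"
  using variable_classes_disjoint components_subset_terms row_X_coeff column_X_coeff
  by (auto elim!: terms_cases)

lemma row_Y_terms:
  assumes "d2 \<noteq> d3"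
  shows "{(i, j, v) \<in> terms. v \<in> Y_offdiag_vars \<and> c i j v = d2} = (if d2 \<noteq> 0 then row_Y else {})"
  using assms variable_classes_disjoint components_subset_terms row_Y_coeff
  by (auto elim!: terms_cases)

lemma column_Y_terms:
  assumes "d2 \<noteq> d3"
  shows "{(i, j, v) \<in> terms. v \<in> Y_offdiag_vars \<and> c i j v = d3} = (if d3 \<noteq> 0 then column_Y else {})"
  using assms variable_classes_disjoint components_subset_terms column_Y_coeff
  by (auto elim!: terms_cases)

lemma diag_Y_terms:
  "{(i, j, v) \<in> terms. v \<in> Y_diag_vars \<and> c i j v = d4} = (if d4 \<noteq> 0 then {(a, a, Y a a)} else {})"
  using variable_classes_disjoint components_subset_terms diag_coeff
  by (auto elim!: terms_cases)

lemma card_row_X: "card row_X = k - 1"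
  and card_column_X: "card column_X = k - 1"
  and card_row_Y: "card row_Y = k - 1"
  and card_column_Y: "card column_Y = k - 1"
  using a_lt_k unfolding row_X_def column_X_def row_Y_def column_Y_def
  by (subst card_image; force intro: inj_onI)+

lemma card_row_X_Un_column_X: "card (row_X \<union> column_X) = 2 * k - 2"
proof -
  have "row_X \<inter> column_X = {}"
    unfolding row_X_def column_X_def by auto
  then have "card (row_X \<union> column_X) = card row_X + card column_X"
    by (rule card_Un_disjoint[rotated 2]) (simp_all add: row_X_def column_X_def)
  then show ?thesis
    using card_row_X card_column_X a_lt_k by simp
qed

lemma components_disjoint:
  "(row_X \<union> column_X) \<inter> row_Y = {}" "(row_X \<union> column_X) \<inter> column_Y = {}"
  "(row_X \<union> column_X) \<inter> {(a, a, Y a a)} = {}" "row_Y \<inter> column_Y = {}"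
  "row_Y \<inter> {(a, a, Y a a)} = {}" "column_Y \<inter> {(a, a, Y a a)} = {}"
  using a_lt_k unfolding row_X_def column_X_def row_Y_def column_Y_def by auto

end

theorem lemma2p12:
  fixes k d t a u :: nat and P :: "nat \<Rightarrow> cpoly" and X Y :: "nat \<Rightarrow> nat \<Rightarrow> nat"
    and p :: ncpoly and d1 d2 d3 :: real
  assumes "k \<ge> 1"
    and "nc_rep k P X Y p"
    and "nc_has_degree p d" and "d > 1"
    and "t \<ge> 2"
    and "p (wX t) = d1" and "p (wX (t - 1) @ [True]) = d2" and "p (True # wX (t - 1)) = d3"
    and "d1 \<noteq> d2" and "d1 \<noteq> d3" and "d2 \<noteq> d3"
    and "a < k" and "u = X a a"
  shows
   "let c = (\<lambda>i j v. ncentry k p X Y i j (replicate_mset (t - 1) u + {#v#}));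
        T = {(i, j, v). i < k \<and> j < k \<and> v \<noteq> u \<and> c i j v \<noteq> 0};
        XV = {X i j | i j. i < k \<and> j < k};
        YO = {Y i j | i j. i < k \<and> j < k \<and> i \<noteq> j};
        YD = {Y i i | i. i < k};
        T1 = {(i, j, v) \<in> T. v \<in> XV \<and> c i j v = d1};
        T2 = {(i, j, v) \<in> T. v \<in> YO \<and> c i j v = d2};
        T3 = {(i, j, v) \<in> T. v \<in> YO \<and> c i j v = d3};
        T4 = {(i, j, v) \<in> T. v \<in> YD \<and> c i j v = phi p (t - 1) 1}
    in card T1 = (if d1 \<noteq> 0 then 2 * k - 2 else 0)
     \<and> card T2 = (if d2 \<noteq> 0 then k - 1 else 0)
     \<and> card T3 = (if d3 \<noteq> 0 then k - 1 else 0)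
     \<and> card T4 = (if phi p (t - 1) 1 \<noteq> 0 then 1 else 0)
     \<and> T = T1 \<union> T2 \<union> T3 \<union> T4
     \<and> T1 \<inter> T2 = {} \<and> T1 \<inter> T3 = {} \<and> T1 \<inter> T4 = {}
     \<and> T2 \<inter> T3 = {} \<and> T2 \<inter> T4 = {} \<and> T3 \<inter> T4 = {}
     \<and> (\<forall>b<k. b \<noteq> a \<longrightarrow>
          c a b (X a b) = d1 \<and> c a b (Y a b) = d2
          \<and> (\<forall>v. v \<noteq> u \<and> v \<noteq> X a b \<and> v \<noteq> Y a b \<longrightarrow> c a b v = 0)
          \<and> c b a (X b a) = d1 \<and> c b a (Y b a) = d3
          \<and> (\<forall>v. v \<noteq> u \<and> v \<noteq> X b a \<and> v \<noteq> Y b a \<longrightarrow> c b a v = 0))"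
proof -
  from assms(2) have fin: "finite (nc_support p)"
    and "bij_betw (\<lambda>(c, i, j). if c then Y i j else X i j) (UNIV \<times> {..<k} \<times> {..<k}) {1..2 * k^2}"
    unfolding nc_rep_def by auto
  then interpret nc_variables k X Y
    by unfold_locales (rule bij_betw_imp_inj_on)
  interpret diag_coefficients k X Y a "\<lambda>i j v. ncentry k p X Y i j (replicate_mset (t - 1) (X a a) + {#v#})"
    d1 d2 d3 "phi p (t - 1) 1"
    using assms(5-8,12) ncentry_diag[OF fin] ncentry_row[OF fin] ncentry_column[OF fin]
      ncentry_off_cross[OF fin]
    by unfold_locales auto
  show ?thesis
    unfolding Let_def assms(13) terms_def[symmetric] X_vars_def[symmetric] Y_offdiag_vars_def[symmetric]
      Y_diag_vars_def[symmetric]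
    unfolding X_terms row_Y_terms[OF assms(11)] column_Y_terms[OF assms(11)] diag_Y_terms
    unfolding terms_eq
    using card_row_X_Un_column_X card_row_Y card_column_Y components_disjoint row_coeffs column_coeffs
    by simp
qed

end
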